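(* Let $\Bbbk$ be a field, $H$ a Hopf $\Bbbk$-algebra with bijective antipode, and $A$ a left $H$-module $\Bbbk$-algebra. For $q\in\operatorname{Q} A$ let $D_q=\{ a \in A \mid qAa \subseteq A \text{ and } aAq \subseteq A \}$, and define \[ \operatorname{Q}^H A = \{ q \in \operatorname{Q} A \mid h.(dq) = (h.d)q \text{ and } h.(qd) = q(h.d) \text{ for all } h \in H,\ d \in D_q \}. \] Let $\mathscr{E}^H$ be the set of two-sided ideals of $A$ that are $H$-submodules and have zero left and right annihilator in $A$. Then: (a) $D_q \in \mathscr{E}^H$ for every $q \in \operatorname{Q}^H A$. (b) Let $q \in \operatorname{Q} A$. If there is some $I \in \mathscr{E}^H$ with $I \subseteq D_q$ such that $h.(aq) = (h.a)q$ and $h.(qa) = q(h.a)$ for all $h \in H$ and $a \in I$, then $q \in \operatorname{Q}^H A$. (c) $\operatorname{Q}^H A$ is a subalgebra of $\operatorname{Q} A$, and $A^H \subseteq \operatorname{Q}^H A$, where $A^H=\{a\in A \mid h.a=\varepsilon(h)a \ \forall h\in H\}$.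
   Context: A left $H$-module algebra is a $\Bbbk$-algebra $A$ with $1$ that is a left $H$-module via $h\otimes a\mapsto h.a$ such that $h.(ab)=(h_1.a)(h_2.b)$ (Sweedler notation $\Delta h=h_1\otimes h_2$) and $h.1=\varepsilon(h)1$, where $\varepsilon$ is the counit of $H$. $\operatorname{Q} A$ denotes the symmetric (Martindale) ring of quotients of $A$; $A$ is a subring of $\operatorname{Q} A$, and for $q \in \operatorname{Q} A$ the set $D_q$ is a two-sided ideal of $A$ with zero left and right annihilator. *)

theory Defs
  imports Complex_Main
begin

text \<open>Elements of H (x) H and H (x) H (x) H are represented by finite lists of
pairs/triples (finite sums of simple tensors).  Over a field, two such tensors
are equal iff they agree under all products of linear functionals.\<close>

definition teq2 :: "('k::field \<Rightarrow> 'h::ab_group_add \<Rightarrow> 'h) \<Rightarrow> ('h \<times> 'h) list \<Rightarrow> ('h \<times> 'h) list \<Rightarrow> bool" where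
  "teq2 s xs ys \<longleftrightarrow>
     (\<forall>f g :: 'h \<Rightarrow> 'k. Vector_Spaces.linear s (*) f \<and> Vector_Spaces.linear s (*) g \<longrightarrow>
        sum_list (map (\<lambda>(x,y). f x * g y) xs) = sum_list (map (\<lambda>(x,y). f x * g y) ys))"

definition teq3 :: "('k::field \<Rightarrow> 'h::ab_group_add \<Rightarrow> 'h) \<Rightarrow> ('h \<times> 'h \<times> 'h) list \<Rightarrow> ('h \<times> 'h \<times> 'h) list \<Rightarrow> bool" where
  "teq3 s xs ys \<longleftrightarrow>
     (\<forall>f g u :: 'h \<Rightarrow> 'k. Vector_Spaces.linear s (*) f \<and> Vector_Spaces.linear s (*) g
          \<and> Vector_Spaces.linear s (*) u \<longrightarrow>
        sum_list (map (\<lambda>(x,y,z). f x * g y * u z) xs) = sum_list (map (\<lambda>(x,y,z). f x * g y * u z) ys))"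

locale k_algebra = vector_space sc for sc :: "'k::field \<Rightarrow> 'a::ring_1 \<Rightarrow> 'a" +
  assumes scale_mult_left: "sc c (x * y) = sc c x * y"
    and scale_mult_right: "sc c (x * y) = x * sc c y"

locale hopf_algebra = k_algebra sH for sH :: "'k::field \<Rightarrow> 'h::ring_1 \<Rightarrow> 'h" +
  fixes Delta :: "'h \<Rightarrow> ('h \<times> 'h) list" and eps :: "'h \<Rightarrow> 'k" and S :: "'h \<Rightarrow> 'h"
  assumes comult_add: "teq2 sH (Delta (x + y)) (Delta x @ Delta y)"
    and comult_scale: "teq2 sH (Delta (sH c x)) (map (\<lambda>(a,b). (sH c a, b)) (Delta x))"
    and comult_mult: "teq2 sH (Delta (x * y))
          (concat (map (\<lambda>(a,b). map (\<lambda>(a',b'). (a * a', b * b')) (Delta y)) (Delta x)))"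
    and comult_one: "teq2 sH (Delta 1) [(1, 1)]"
    and coassoc: "teq3 sH
          (concat (map (\<lambda>(a,b). map (\<lambda>(a1,a2). (a1, a2, b)) (Delta a)) (Delta x)))
          (concat (map (\<lambda>(a,b). map (\<lambda>(b1,b2). (a, b1, b2)) (Delta b)) (Delta x)))"
    and counit_linear: "Vector_Spaces.linear sH (*) eps"
    and counit_mult: "eps (x * y) = eps x * eps y"
    and counit_one: "eps 1 = 1"
    and counit_left: "sum_list (map (\<lambda>(a,b). sH (eps a) b) (Delta x)) = x"
    and counit_right: "sum_list (map (\<lambda>(a,b). sH (eps b) a) (Delta x)) = x"
    and antipode_linear: "Vector_Spaces.linear sH sH S"
    and antipode_left: "sum_list (map (\<lambda>(a,b). S a * b) (Delta x)) = sH (eps x) 1"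
    and antipode_right: "sum_list (map (\<lambda>(a,b). a * S b) (Delta x)) = sH (eps x) 1"

locale H_module_algebra = hopf_algebra sH Delta eps S + A: k_algebra sA
  for sH :: "'k::field \<Rightarrow> 'h::ring_1 \<Rightarrow> 'h" and Delta eps S
    and sA :: "'k \<Rightarrow> 'a::ring_1 \<Rightarrow> 'a" +
  fixes act :: "'h \<Rightarrow> 'a \<Rightarrow> 'a"
  assumes act_linear_right: "Vector_Spaces.linear sA sA (act h)"
    and act_linear_left: "Vector_Spaces.linear sH sA (\<lambda>h. act h a)"
    and act_one: "act 1 a = a"
    and act_mult: "act (h * g) a = act h (act g a)"
    and act_prod: "act h (a * b) = sum_list (map (\<lambda>(x,y). act x a * act y b) (Delta h))"
    and act_unit: "act h 1 = sA (eps h) 1"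

definition ring_ideal :: "'a::ring_1 set \<Rightarrow> bool" where
  "ring_ideal I \<longleftrightarrow> 0 \<in> I \<and> (\<forall>x\<in>I. \<forall>y\<in>I. x + y \<in> I) \<and> (\<forall>x\<in>I. - x \<in> I)
     \<and> (\<forall>x\<in>I. \<forall>a. a * x \<in> I \<and> x * a \<in> I)"

definition dense_ideals :: "'a::ring_1 set set" where
  "dense_ideals = {I. ring_ideal I
      \<and> (\<forall>a. (\<forall>x\<in>I. a * x = 0) \<longrightarrow> a = 0)
      \<and> (\<forall>a. (\<forall>x\<in>I. x * a = 0) \<longrightarrow> a = 0)}"

text \<open>\<open>Q\<close> (with embedding \<open>iota\<close>) is the symmetric Martindale ring of quotients of the
ring \<open>A\<close> (standard characterization, unique up to unique isomorphism over A).\<close>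
definition sym_martindale :: "('a::ring_1 \<Rightarrow> 'q::ring_1) \<Rightarrow> bool" where
  "sym_martindale iota \<longleftrightarrow>
     inj iota \<and> iota 1 = 1 \<and> (\<forall>a b. iota (a + b) = iota a + iota b)
     \<and> (\<forall>a b. iota (a * b) = iota a * iota b)
     \<and> (\<forall>q. \<exists>I\<in>dense_ideals. (\<forall>x\<in>I. q * iota x \<in> range iota \<and> iota x * q \<in> range iota))
     \<and> (\<forall>q. \<forall>I\<in>dense_ideals. (\<forall>x\<in>I. q * iota x = 0) \<or> (\<forall>x\<in>I. iota x * q = 0) \<longrightarrow> q = 0)
     \<and> (\<forall>I\<in>dense_ideals. \<forall>f g.
          (\<forall>x\<in>I. \<forall>y\<in>I. f (x + y) = f x + f y \<and> g (x + y) = g x + g y)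
          \<and> (\<forall>x\<in>I. \<forall>a. f (x * a) = f x * a \<and> g (a * x) = a * g x)
          \<and> (\<forall>x\<in>I. \<forall>y\<in>I. x * f y = g x * y)
          \<longrightarrow> (\<exists>q. \<forall>x\<in>I. q * iota x = iota (f x) \<and> iota x * q = iota (g x)))"

definition Dq :: "('a::ring_1 \<Rightarrow> 'q::ring_1) \<Rightarrow> 'q \<Rightarrow> 'a set" where
  "Dq iota q = {a. \<forall>b. q * iota b * iota a \<in> range iota \<and> iota a * iota b * q \<in> range iota}"

definition QH :: "('h \<Rightarrow> 'a \<Rightarrow> 'a) \<Rightarrow> ('a::ring_1 \<Rightarrow> 'q::ring_1) \<Rightarrow> 'q set" where
  "QH act iota = {q. \<forall>h. \<forall>d\<in>Dq iota q.
      (\<forall>a. iota a = iota d * q \<longrightarrow> iota (act h a) = iota (act h d) * q)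
    \<and> (\<forall>a. iota a = q * iota d \<longrightarrow> iota (act h a) = q * iota (act h d))}"

text \<open>\<open>E^H\<close>: two-sided ideals that are H-submodules with zero left/right annihilator.
(Ideals of a unital k-algebra are automatically k-subspaces.)\<close>
definition EH :: "('h \<Rightarrow> 'a \<Rightarrow> 'a) \<Rightarrow> 'a::ring_1 set set" where
  "EH act = {I \<in> dense_ideals. \<forall>h. \<forall>x\<in>I. act h x \<in> I}"

definition invariants :: "('h \<Rightarrow> 'a \<Rightarrow> 'a) \<Rightarrow> ('h \<Rightarrow> 'k) \<Rightarrow> ('k \<Rightarrow> 'a \<Rightarrow> 'a) \<Rightarrow> 'a set" where
  "invariants act eps sA = {a. \<forall>h. act h a = sA (eps h) a}"

text \<open>k-subalgebra of Q; the k-structure of Q is \<open>c \<cdot> q = iota (c \<cdot> 1) * q\<close>.\<close>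
definition subalgebra_Q :: "('k \<Rightarrow> 'a \<Rightarrow> 'a) \<Rightarrow> ('a::ring_1 \<Rightarrow> 'q::ring_1) \<Rightarrow> 'q set \<Rightarrow> bool" where
  "subalgebra_Q sA iota B \<longleftrightarrow> 0 \<in> B \<and> 1 \<in> B \<and> (\<forall>x\<in>B. \<forall>y\<in>B. x + y \<in> B \<and> x * y \<in> B)
     \<and> (\<forall>x\<in>B. - x \<in> B) \<and> (\<forall>c. \<forall>x\<in>B. iota (sA c 1) * x \<in> B)"

end

theory Submission
  imports Defs
begin

(*
  Everything rests on the two expansions
    (h.a) x = sum h1.(a (S h2 . x))   and   x (h.a) = sum h2.((S^-1 h1 . x) a),
  the second of which needs sum h2 S^-1(h1) = eps(h) 1; this follows from the antipode being an
  anti-homomorphism, proved by the usual convolution argument on maps H (x) H -> H.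

  For (b), to show h.(dq) = (h.d)q one multiplies on the left by x from a dense H-stable ideal I
  and expands x (h.(dq)) by the second identity: the resulting terms h2.((S^-1 h1 . x) d q) only
  involve the compatibility on elements of I, and I has zero left annihilator.  For (a), the same expansions show that D_q is H-stable when q is in
  Q^H A.  For (c), (b) is applied for p + q to the intersection of D_p and D_q, and for pq to the
  ideal of all x in both D_p and D_q with q A x <= D_p and x A p <= D_q, which contains D_q D_p and
  hence is dense; invariant elements commute with the action.

  Tensors are lists of simple tensors compared against products of linear functionals; a finite
  dual basis transfers such identities to arbitrary multilinear maps.
*)

section \<open>Linear maps and tensors\<close>

lemma linearD_add: "Vector_Spaces.linear s1 s2 f \<Longrightarrow> f (x + y) = f x + f y"
  by (simp add: Vector_Spaces.linear_iff)

lemma linearD_scale: "Vector_Spaces.linear s1 s2 f \<Longrightarrow> f (s1 c x) = s2 c (f x)"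
  by (simp add: Vector_Spaces.linear_iff)

lemma linearD_zero: "Vector_Spaces.linear s1 s2 f \<Longrightarrow> f 0 = 0"
  by (metis add_cancel_right_right linearD_add add_0)

lemma linearD_sum: "Vector_Spaces.linear s1 s2 f \<Longrightarrow> f (\<Sum>e\<in>E. g e) = (\<Sum>e\<in>E. f (g e))"
  by (induction E rule: infinite_finite_induct) (auto simp: linearD_zero linearD_add)

lemma linearD_sum_list:
  "Vector_Spaces.linear s1 s2 f \<Longrightarrow> f (sum_list (map g xs)) = sum_list (map (\<lambda>x. f (g x)) xs)"
  by (induction xs) (auto simp: linearD_zero linearD_add)

lemma vector_space_linearI:
  assumes "vector_space s1" "vector_space s2"
    "\<And>x y. f (x + y) = f x + f y" "\<And>c x. f (s1 c x) = s2 c (f x)"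
  shows "Vector_Spaces.linear s1 s2 f"
  using assms by (simp add: Vector_Spaces.linear_iff)

lemma vector_space_field: "vector_space ((*) :: 'k::field \<Rightarrow> 'k \<Rightarrow> 'k)"
  by unfold_locales (auto simp: algebra_simps)

lemma sum_list_map_sum_swap:
  "sum_list (map (\<lambda>p. \<Sum>e\<in>E. g p e) xs) = (\<Sum>e\<in>E. sum_list (map (\<lambda>p. g p e) xs))"
  by (induction xs) (auto simp: sum.distrib)

lemma sum_list_map_swap:
  fixes f :: "'a \<Rightarrow> 'b \<Rightarrow> 'c::comm_monoid_add"
  shows "sum_list (map (\<lambda>a. sum_list (map (\<lambda>b. f a b) ys)) xs) =
    sum_list (map (\<lambda>b. sum_list (map (\<lambda>a. f a b) xs)) ys)"
  by (induction xs) (auto simp: sum_list_addf)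

lemma sum_list_concat: "sum_list (concat xss) = sum_list (map sum_list xss)"
  by (induction xss) auto

context vector_space
begin

lemma scale_sum_list_right: "scale c (sum_list (map f xs)) = sum_list (map (\<lambda>x. scale c (f x)) xs)"
  by (induction xs) (auto simp: scale_right_distrib)

lemma scale_sum_list_left: "sum_list (map (\<lambda>x. scale (g x) v) xs) = scale (sum_list (map g xs)) v"
  by (induction xs) (auto simp: scale_left_distrib)

end

lemma finite_dual_coordinates:
  fixes s :: "'k::field \<Rightarrow> 'h::ab_group_add \<Rightarrow> 'h"
  assumes vs: "vector_space s" and fin: "finite C"
  obtains Bs f where "\<And>e. e \<in> Bs \<Longrightarrow> Vector_Spaces.linear s (*) (f e)"
    "\<And>x. x \<in> C \<Longrightarrow> x = (\<Sum>e\<in>Bs. s (f e x) e)"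
proof -
  interpret vector_space s by fact
  interpret dual: vector_space_pair s "(*) :: 'k \<Rightarrow> 'k \<Rightarrow> 'k"
    using vs vector_space_field by (simp add: vector_space_pair_def)
  obtain Bs where Bs: "Bs \<subseteq> C" "independent Bs" "C \<subseteq> span Bs"
    using maximal_independent_subset by blast
  have finB: "finite Bs" using Bs(1) fin finite_subset by blast
  have "\<forall>e. \<exists>g. e \<in> Bs \<longrightarrow> Vector_Spaces.linear s (*) g \<and> (\<forall>x\<in>Bs. g x = (if x = e then 1 else 0))"
    using dual.linear_independent_extend[OF Bs(2), of "\<lambda>x. if x = e then 1 else 0" for e] by blast
  then obtain f where "\<forall>e. e \<in> Bs \<longrightarrow> Vector_Spaces.linear s (*) (f e) \<and> (\<forall>x\<in>Bs. f e x = (if x = e then 1 else 0))"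
    by (rule choice[THEN exE])
  then have f: "\<And>e. e \<in> Bs \<Longrightarrow> Vector_Spaces.linear s (*) (f e)"
    "\<And>e x. e \<in> Bs \<Longrightarrow> x \<in> Bs \<Longrightarrow> f e x = (if x = e then 1 else 0)"
    by blast+
  have "x = (\<Sum>e\<in>Bs. s (f e x) e)" if "x \<in> C" for x
  proof -
    have "x \<in> span Bs" using that Bs(3) by blast
    then obtain u where u: "x = (\<Sum>v\<in>Bs. s (u v) v)"
      using span_finite[OF finB] by blast
    have "f e x = u e" if "e \<in> Bs" for e
    proof -
      have "f e x = (\<Sum>v\<in>Bs. u v * f e v)"
        unfolding u using f(1)[OF that] by (simp add: linearD_sum linearD_scale)
      also have "\<dots> = (\<Sum>v\<in>Bs. if v = e then u v else 0)"
        by (rule sum.cong) (auto simp: f(2)[OF that])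
      finally show ?thesis using that finB by simp
    qed
    then show ?thesis using u by (metis (no_types, lifting) sum.cong)
  qed
  with f(1) show thesis by (rule that)
qed

lemma linear_coordinate_expansion:
  assumes "Vector_Spaces.linear sH sV \<Phi>" and "x = (\<Sum>e\<in>Bs. sH (f e x) e)"
  shows "\<Phi> x = (\<Sum>e\<in>Bs. sV (f e x) (\<Phi> e))"
proof -
  have "\<Phi> x = \<Phi> (\<Sum>e\<in>Bs. sH (f e x) e)" using assms(2) by (rule arg_cong)
  also have "\<dots> = (\<Sum>e\<in>Bs. sV (f e x) (\<Phi> e))" by (simp add: linearD_sum[OF assms(1)] linearD_scale[OF assms(1)])
  finally show ?thesis .
qed

lemma bilinear_coordinate_expansion:
  assumes "vector_space sV"
    and lin1: "\<And>y. Vector_Spaces.linear sH sV (\<lambda>x. B x y)" and lin2: "\<And>x. Vector_Spaces.linear sH sV (B x)"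
    and coord_x: "x = (\<Sum>e\<in>Bs. sH (f e x) e)" and coord_y: "y = (\<Sum>e\<in>Bs. sH (f e y) e)"
  shows "B x y = (\<Sum>e\<in>Bs. \<Sum>e'\<in>Bs. sV (f e x * f e' y) (B e e'))"
proof -
  interpret V: vector_space sV by fact
  have "B x y = (\<Sum>e\<in>Bs. sV (f e x) (B e y))"
    by (rule linear_coordinate_expansion[where f=f, OF lin1 coord_x])
  also have "\<dots> = (\<Sum>e\<in>Bs. sV (f e x) (\<Sum>e'\<in>Bs. sV (f e' y) (B e e')))"
    using linear_coordinate_expansion[where f=f, OF lin2 coord_y] by simp
  finally show ?thesis by (simp add: V.scale_sum_right mult.commute)
qed

lemma trilinear_coordinate_expansion:
  assumes "vector_space sV"
    and lin1: "\<And>y z. Vector_Spaces.linear sH sV (\<lambda>x. B x y z)"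
    and lin2: "\<And>x z. Vector_Spaces.linear sH sV (\<lambda>y. B x y z)"
    and lin3: "\<And>x y. Vector_Spaces.linear sH sV (B x y)"
    and coord_x: "x = (\<Sum>e\<in>Bs. sH (f e x) e)" and coord_y: "y = (\<Sum>e\<in>Bs. sH (f e y) e)"
    and coord_z: "z = (\<Sum>e\<in>Bs. sH (f e z) e)"
  shows "B x y z = (\<Sum>e\<in>Bs. \<Sum>e'\<in>Bs. \<Sum>e''\<in>Bs. sV (f e x * f e' y * f e'' z) (B e e' e''))"
proof -
  interpret V: vector_space sV by fact
  have "B x y z = (\<Sum>e\<in>Bs. sV (f e x) (B e y z))"
    by (rule linear_coordinate_expansion[where f=f, OF lin1 coord_x])
  also have "\<dots> = (\<Sum>e\<in>Bs. sV (f e x) (\<Sum>e'\<in>Bs. sV (f e' y) (B e e' z)))"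
    using linear_coordinate_expansion[where f=f, OF lin2 coord_y] by simp
  also have "\<dots> = (\<Sum>e\<in>Bs. sV (f e x) (\<Sum>e'\<in>Bs. sV (f e' y) (\<Sum>e''\<in>Bs. sV (f e'' z) (B e e' e''))))"
    using linear_coordinate_expansion[where f=f, OF lin3 coord_z] by simp
  finally show ?thesis by (simp add: V.scale_sum_right mult.commute mult.left_commute)
qed

lemma teq2_bilinear_eq:
  fixes sH :: "'k::field \<Rightarrow> 'h::ab_group_add \<Rightarrow> 'h" and sV :: "'k \<Rightarrow> 'v::ab_group_add \<Rightarrow> 'v"
  assumes "vector_space sH" "vector_space sV" "teq2 sH xs ys"
    and lin1: "\<And>y. Vector_Spaces.linear sH sV (\<lambda>x. B x y)"
    and lin2: "\<And>x. Vector_Spaces.linear sH sV (B x)"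
  shows "sum_list (map (\<lambda>(x,y). B x y) xs) = sum_list (map (\<lambda>(x,y). B x y) ys)"
proof -
  interpret V: vector_space sV by fact
  define C where "C = fst ` set xs \<union> snd ` set xs \<union> fst ` set ys \<union> snd ` set ys"
  have "finite C" unfolding C_def by simp
  then obtain Bs f where lin_f: "\<And>e. e \<in> Bs \<Longrightarrow> Vector_Spaces.linear sH (*) (f e)"
    and coord: "\<And>x. x \<in> C \<Longrightarrow> x = (\<Sum>e\<in>Bs. sH (f e x) e)"
    using finite_dual_coordinates[OF \<open>vector_space sH\<close>] by blast
  have expand: "sum_list (map (\<lambda>(x,y). B x y) L) =
      (\<Sum>e\<in>Bs. \<Sum>e'\<in>Bs. sV (sum_list (map (\<lambda>(x,y). f e x * f e' y) L)) (B e e'))"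
    if "\<forall>p\<in>set L. fst p \<in> C \<and> snd p \<in> C" for L
  proof -
    have "B x y = (\<Sum>e\<in>Bs. \<Sum>e'\<in>Bs. sV (f e x * f e' y) (B e e'))" if "x \<in> C" "y \<in> C" for x y
      using bilinear_coordinate_expansion[where f=f, OF \<open>vector_space sV\<close> lin1 lin2
          coord[OF that(1)] coord[OF that(2)]] .
    then have "sum_list (map (\<lambda>(x,y). B x y) L) =
        sum_list (map (\<lambda>p. \<Sum>e\<in>Bs. \<Sum>e'\<in>Bs. sV (f e (fst p) * f e' (snd p)) (B e e')) L)"
      using that by (intro arg_cong[where f=sum_list] map_cong) auto
    then show ?thesis
      by (simp add: sum_list_map_sum_swap V.scale_sum_list_left split_def)
  qed
  have "sum_list (map (\<lambda>(x,y). f e x * f e' y) xs) = sum_list (map (\<lambda>(x,y). f e x * f e' y) ys)"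
    if "e \<in> Bs" "e' \<in> Bs" for e e'
    using \<open>teq2 sH xs ys\<close> lin_f[OF that(1)] lin_f[OF that(2)] unfolding teq2_def by blast
  moreover have "\<forall>p\<in>set xs. fst p \<in> C \<and> snd p \<in> C" "\<forall>p\<in>set ys. fst p \<in> C \<and> snd p \<in> C"
    unfolding C_def by auto
  ultimately show ?thesis
    by (simp only: expand) (intro sum.cong refl; simp)
qed

lemma teq3_trilinear_eq:
  fixes sH :: "'k::field \<Rightarrow> 'h::ab_group_add \<Rightarrow> 'h" and sV :: "'k \<Rightarrow> 'v::ab_group_add \<Rightarrow> 'v"
  assumes "vector_space sH" "vector_space sV" "teq3 sH xs ys"
    and lin1: "\<And>y z. Vector_Spaces.linear sH sV (\<lambda>x. B x y z)"
    and lin2: "\<And>x z. Vector_Spaces.linear sH sV (\<lambda>y. B x y z)"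
    and lin3: "\<And>x y. Vector_Spaces.linear sH sV (B x y)"
  shows "sum_list (map (\<lambda>(x,y,z). B x y z) xs) = sum_list (map (\<lambda>(x,y,z). B x y z) ys)"
proof -
  interpret V: vector_space sV by fact
  define C where "C = fst ` set xs \<union> fst ` snd ` set xs \<union> snd ` snd ` set xs \<union>
     fst ` set ys \<union> fst ` snd ` set ys \<union> snd ` snd ` set ys"
  have "finite C" unfolding C_def by simp
  then obtain Bs f where lin_f: "\<And>e. e \<in> Bs \<Longrightarrow> Vector_Spaces.linear sH (*) (f e)"
    and coord: "\<And>x. x \<in> C \<Longrightarrow> x = (\<Sum>e\<in>Bs. sH (f e x) e)"
    using finite_dual_coordinates[OF \<open>vector_space sH\<close>] by blast
  have expand: "sum_list (map (\<lambda>(x,y,z). B x y z) L) = (\<Sum>e\<in>Bs. \<Sum>e'\<in>Bs. \<Sum>e''\<in>Bs.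
      sV (sum_list (map (\<lambda>(x,y,z). f e x * f e' y * f e'' z) L)) (B e e' e''))"
    if "\<forall>p\<in>set L. fst p \<in> C \<and> fst (snd p) \<in> C \<and> snd (snd p) \<in> C" for L
  proof -
    have "B x y z = (\<Sum>e\<in>Bs. \<Sum>e'\<in>Bs. \<Sum>e''\<in>Bs. sV (f e x * f e' y * f e'' z) (B e e' e''))"
      if "x \<in> C" "y \<in> C" "z \<in> C" for x y z
      using trilinear_coordinate_expansion[where f=f, OF \<open>vector_space sV\<close> lin1 lin2 lin3
          coord[OF that(1)] coord[OF that(2)] coord[OF that(3)]] .
    then have "sum_list (map (\<lambda>(x,y,z). B x y z) L) = sum_list (map (\<lambda>p. \<Sum>e\<in>Bs. \<Sum>e'\<in>Bs. \<Sum>e''\<in>Bs.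
        sV (f e (fst p) * f e' (fst (snd p)) * f e'' (snd (snd p))) (B e e' e'')) L)"
      using that by (intro arg_cong[where f=sum_list] map_cong) auto
    then show ?thesis
      by (simp add: sum_list_map_sum_swap V.scale_sum_list_left split_def)
  qed
  have "sum_list (map (\<lambda>(x,y,z). f e x * f e' y * f e'' z) xs) =
      sum_list (map (\<lambda>(x,y,z). f e x * f e' y * f e'' z) ys)"
    if "e \<in> Bs" "e' \<in> Bs" "e'' \<in> Bs" for e e' e''
    using \<open>teq3 sH xs ys\<close> lin_f[OF that(1)] lin_f[OF that(2)] lin_f[OF that(3)]
    unfolding teq3_def by blast
  moreover have "\<forall>p\<in>set xs. fst p \<in> C \<and> fst (snd p) \<in> C \<and> snd (snd p) \<in> C"
     "\<forall>p\<in>set ys. fst p \<in> C \<and> fst (snd p) \<in> C \<and> snd (snd p) \<in> C"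
    unfolding C_def by (auto simp: image_iff)
  ultimately show ?thesis
    by (simp only: expand) (intro sum.cong refl; simp)
qed

section \<open>Hopf algebras\<close>

definition bilinear_map :: "('k::field \<Rightarrow> 'h::ab_group_add \<Rightarrow> 'h) \<Rightarrow> ('h \<Rightarrow> 'h \<Rightarrow> 'h) \<Rightarrow> bool" where
  "bilinear_map s F \<longleftrightarrow>
    (\<forall>y. Vector_Spaces.linear s s (\<lambda>x. F x y)) \<and> (\<forall>x. Vector_Spaces.linear s s (F x))"

context k_algebra
begin

lemma mult_scale_left: "sc c x * y = sc c (x * y)"
  by (simp add: scale_mult_left)

lemma mult_scale_right: "x * sc c y = sc c (x * y)"
  by (simp add: scale_mult_right)

lemma bilinear_map_simps:
  assumes "bilinear_map sc F"
  shows "F (x + x') y = F x y + F x' y" "F x (y + y') = F x y + F x y'"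
    "F (sc c x) y = sc c (F x y)" "F x (sc c y) = sc c (F x y)"
    "F (sum_list (map g xs)) y = sum_list (map (\<lambda>z. F (g z) y) xs)"
    "F x (sum_list (map g xs)) = sum_list (map (\<lambda>z. F x (g z)) xs)"
proof -
  have l1: "Vector_Spaces.linear sc sc (\<lambda>x. F x y)" and l2: "Vector_Spaces.linear sc sc (F x)"
    for x y using assms unfolding bilinear_map_def by blast+
  show "F (x + x') y = F x y + F x' y" using linearD_add[OF l1] .
  show "F x (y + y') = F x y + F x y'" using linearD_add[OF l2] .
  show "F (sc c x) y = sc c (F x y)" using linearD_scale[OF l1] .
  show "F x (sc c y) = sc c (F x y)" using linearD_scale[OF l2] .
  show "F (sum_list (map g xs)) y = sum_list (map (\<lambda>z. F (g z) y) xs)" using linearD_sum_list[OF l1] .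
  show "F x (sum_list (map g xs)) = sum_list (map (\<lambda>z. F x (g z)) xs)" using linearD_sum_list[OF l2] .
qed

lemma bilinear_mapI:
  assumes "\<And>x x' y. F (x + x') y = F x y + F x' y" "\<And>x y y'. F x (y + y') = F x y + F x y'"
    and "\<And>c x y. F (sc c x) y = sc c (F x y)" "\<And>c x y. F x (sc c y) = sc c (F x y)"
  shows "bilinear_map sc F"
  unfolding bilinear_map_def
  by (auto intro!: vector_space_linearI[OF vector_space_axioms vector_space_axioms] simp: assms)

lemma bilinear_mapD:
  assumes "bilinear_map sc F"
  shows "Vector_Spaces.linear sc sc (\<lambda>x. F x y)" "Vector_Spaces.linear sc sc (F x)"
  using assms unfolding bilinear_map_def by blast+

lemma bilinear_map_mult_linear:
  assumes "Vector_Spaces.linear sc sc f" "Vector_Spaces.linear sc sc g"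
  shows "bilinear_map sc (\<lambda>x y. f x * g y)"
  by (rule bilinear_mapI) (simp_all add: linearD_add[OF assms(1)] linearD_add[OF assms(2)]
      linearD_scale[OF assms(1)] linearD_scale[OF assms(2)] distrib_left distrib_right
      mult_scale_left mult_scale_right)

end

context hopf_algebra
begin

lemma coassoc_sum_list:
  fixes sV :: "'k \<Rightarrow> 'v::ab_group_add \<Rightarrow> 'v"
  assumes "vector_space sV"
    and "\<And>y z. Vector_Spaces.linear sH sV (\<lambda>x. F x y z)"
    and "\<And>x z. Vector_Spaces.linear sH sV (\<lambda>y. F x y z)"
    and "\<And>x y. Vector_Spaces.linear sH sV (F x y)"
  shows "sum_list (map (\<lambda>(a,b). sum_list (map (\<lambda>(a1,a2). F a1 a2 b) (Delta a))) (Delta x))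
       = sum_list (map (\<lambda>(a,b). sum_list (map (\<lambda>(b1,b2). F a b1 b2) (Delta b))) (Delta x))"
  using teq3_trilinear_eq[OF vector_space_axioms assms(1) coassoc[of x], of F] assms(2-4)
  by (simp add: map_concat split_def comp_def sum_list_concat)

lemma comult_mult_sum_list:
  fixes sV :: "'k \<Rightarrow> 'v::ab_group_add \<Rightarrow> 'v"
  assumes "vector_space sV"
    and "\<And>y. Vector_Spaces.linear sH sV (\<lambda>x. F x y)" and "\<And>x. Vector_Spaces.linear sH sV (F x)"
  shows "sum_list (map (\<lambda>(a,b). F a b) (Delta (x * y)))
       = sum_list (map (\<lambda>(a,b). sum_list (map (\<lambda>(c,d). F (a * c) (b * d)) (Delta y))) (Delta x))"
  using teq2_bilinear_eq[OF vector_space_axioms assms(1) comult_mult[of x y], of F] assms(2,3)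
  by (simp add: map_concat split_def comp_def sum_list_concat)

lemma antipode_one: "S 1 = 1"
proof -
  have "sum_list (map (\<lambda>(a,b). S a * b) (Delta 1)) = S 1 * 1"
    using teq2_bilinear_eq[OF vector_space_axioms vector_space_axioms comult_one,
        OF bilinear_mapD[OF bilinear_map_mult_linear[OF antipode_linear linear_id]]]
    by simp
  then show ?thesis using antipode_left[of 1] by (simp add: counit_one)
qed

(* Convolution of maps H (x) H -> H, bilinear maps being written curried. *)
definition conv2 :: "('h \<Rightarrow> 'h \<Rightarrow> 'h) \<Rightarrow> ('h \<Rightarrow> 'h \<Rightarrow> 'h) \<Rightarrow> 'h \<Rightarrow> 'h \<Rightarrow> 'h" where
  "conv2 F G x y =
    sum_list (map (\<lambda>(x1,x2). sum_list (map (\<lambda>(y1,y2). F x1 y1 * G x2 y2) (Delta y))) (Delta x))"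

lemma conv2_counit_right:
  assumes "bilinear_map sH F"
  shows "conv2 F (\<lambda>x y. sH (eps x * eps y) 1) x y = F x y"
proof -
  have "F x y = F (sum_list (map (\<lambda>(a,b). sH (eps b) a) (Delta x)))
      (sum_list (map (\<lambda>(c,d). sH (eps d) c) (Delta y)))"
    by (simp add: counit_right)
  then show ?thesis
    unfolding conv2_def
    by (simp only: bilinear_map_simps(5)[OF assms])
      (simp add: bilinear_map_simps[OF assms] split_def mult_scale_right scale_scale scale_sum_list_right mult.commute)
qed

lemma conv2_counit_left:
  assumes "bilinear_map sH F"
  shows "conv2 (\<lambda>x y. sH (eps x * eps y) 1) F x y = F x y"
proof -
  have "F x y = F (sum_list (map (\<lambda>(a,b). sH (eps a) b) (Delta x)))
      (sum_list (map (\<lambda>(c,d). sH (eps c) d) (Delta y)))"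
    by (simp add: counit_left)
  then show ?thesis
    unfolding conv2_def
    by (simp only: bilinear_map_simps(5)[OF assms])
      (simp add: bilinear_map_simps[OF assms] split_def mult_scale_left scale_scale scale_sum_list_right mult.commute)
qed

lemma conv2_assoc:
  assumes F: "bilinear_map sH F" and G: "bilinear_map sH G" and K: "bilinear_map sH K"
  shows "conv2 (conv2 F G) K x y = conv2 F (conv2 G K) x y"
proof -
  define \<Phi> where "\<Phi> p q r = sum_list (map (\<lambda>(c,d). sum_list (map (\<lambda>(c1,c2).
      F p c1 * G q c2 * K r d) (Delta c))) (Delta y))" for p q r
  define \<Psi> where "\<Psi> p q r = sum_list (map (\<lambda>(c,d). sum_list (map (\<lambda>(d1,d2).
      F p c * G q d1 * K r d2) (Delta d))) (Delta y))" for p q r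
  note simps = bilinear_map_simps[OF F] bilinear_map_simps[OF G] bilinear_map_simps[OF K]
    distrib_left distrib_right mult_scale_left mult_scale_right scale_sum_list_right sum_list_addf split_def
  have "conv2 (conv2 F G) K x y =
      sum_list (map (\<lambda>(a,b). sum_list (map (\<lambda>(a1,a2). \<Phi> a1 a2 b) (Delta a))) (Delta x))"
    unfolding conv2_def \<Phi>_def
    by (simp add: sum_list_mult_const[symmetric] split_def) (subst sum_list_map_swap, rule refl)
  also have "\<dots> = sum_list (map (\<lambda>(a,b). sum_list (map (\<lambda>(b1,b2). \<Phi> a b1 b2) (Delta b))) (Delta x))"
    by (rule coassoc_sum_list[OF vector_space_axioms];
        rule vector_space_linearI[OF vector_space_axioms vector_space_axioms]; simp add: \<Phi>_def simps)
  also have "\<dots> = sum_list (map (\<lambda>(a,b). sum_list (map (\<lambda>(b1,b2). \<Psi> a b1 b2) (Delta b))) (Delta x))"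
  proof -
    have "\<Phi> p q r = \<Psi> p q r" for p q r
      unfolding \<Phi>_def \<Psi>_def
      by (rule coassoc_sum_list[OF vector_space_axioms];
          rule vector_space_linearI[OF vector_space_axioms vector_space_axioms]; simp add: simps)
    then show ?thesis by simp
  qed
  also have "\<dots> = conv2 F (conv2 G K) x y"
    unfolding conv2_def \<Psi>_def
    by (simp add: sum_list_const_mult[symmetric] split_def mult.assoc) (subst sum_list_map_swap, rule refl)
  finally show ?thesis .
qed

lemma antipode_conv2_mult: "conv2 (\<lambda>x y. S (x * y)) (*) x y = sH (eps x * eps y) 1"
proof -
  have "conv2 (\<lambda>x y. S (x * y)) (*) x y = sum_list (map (\<lambda>(p,q). S p * q) (Delta (x * y)))"
    unfolding conv2_def
    using comult_mult_sum_list[OF vector_space_axioms,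
          OF bilinear_mapD[OF bilinear_map_mult_linear[OF antipode_linear linear_id]]]
    by simp
  then show ?thesis by (simp add: antipode_left counit_mult)
qed

lemma mult_conv2_antipode_op: "conv2 (*) (\<lambda>x y. S y * S x) x y = sH (eps x * eps y) 1"
proof -
  have "conv2 (*) (\<lambda>x y. S y * S x) x y =
      sum_list (map (\<lambda>(a,b). a * sum_list (map (\<lambda>(c,d). c * S d) (Delta y)) * S b) (Delta x))"
    unfolding conv2_def
    by (simp add: sum_list_mult_const[symmetric] sum_list_const_mult[symmetric] split_def mult.assoc)
  also have "\<dots> = sum_list (map (\<lambda>(a,b). sH (eps y) (a * S b)) (Delta x))"
    by (simp only: antipode_right) (simp add: mult_scale_left mult_scale_right split_def)
  also have "\<dots> = sH (eps y) (sum_list (map (\<lambda>(a,b). a * S b) (Delta x)))"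
    by (simp add: scale_sum_list_right split_def)
  also have "\<dots> = sH (eps y) (sH (eps x) 1)"
    by (simp only: antipode_right)
  finally show ?thesis by (simp add: scale_scale mult.commute)
qed

lemma antipode_mult: "S (x * y) = S y * S x"
proof -
  have S_mult: "bilinear_map sH (\<lambda>x y. S (x * y))"
    by (rule bilinear_mapI) (simp_all add: linearD_add[OF antipode_linear] linearD_scale[OF antipode_linear]
        distrib_left distrib_right mult_scale_left mult_scale_right)
  have mult: "bilinear_map sH (*)"
    using bilinear_map_mult_linear[OF linear_id linear_id] by simp
  have S_op: "bilinear_map sH (\<lambda>x y. S y * S x)"
    by (rule bilinear_mapI) (simp_all add: linearD_add[OF antipode_linear] linearD_scale[OF antipode_linear]
        distrib_left distrib_right mult_scale_left mult_scale_right)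
  have inv_left: "conv2 (\<lambda>x y. S (x * y)) (*) = (\<lambda>x y. sH (eps x * eps y) 1)"
    by (intro ext) (rule antipode_conv2_mult)
  have inv_right: "conv2 (*) (\<lambda>x y. S y * S x) = (\<lambda>x y. sH (eps x * eps y) 1)"
    by (intro ext) (rule mult_conv2_antipode_op)
  have "S (x * y) = conv2 (\<lambda>x y. S (x * y)) (conv2 (*) (\<lambda>x y. S y * S x)) x y"
    unfolding inv_right by (rule conv2_counit_right[OF S_mult, symmetric])
  also have "\<dots> = conv2 (conv2 (\<lambda>x y. S (x * y)) (*)) (\<lambda>x y. S y * S x) x y"
    by (rule conv2_assoc[OF S_mult mult S_op, symmetric])
  also have "\<dots> = S y * S x"
    unfolding inv_left by (rule conv2_counit_left[OF S_op])
  finally show ?thesis .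
qed

lemma linear_inv_antipode:
  assumes "bij S"
  shows "Vector_Spaces.linear sH sH (inv S)"
proof (rule vector_space_linearI[OF vector_space_axioms vector_space_axioms])
  have S_inv: "S (inv S x) = x" for x
    using assms by (simp add: bij_is_surj surj_f_inv_f)
  have S_eq: "S x = S y \<Longrightarrow> x = y" for x y
    using assms by (simp add: bij_is_inj inj_eq)
  show "inv S (x + y) = inv S x + inv S y" for x y
    by (rule S_eq) (simp add: S_inv linearD_add[OF antipode_linear])
  show "inv S (sH c x) = sH c (inv S x)" for c x
    by (rule S_eq) (simp add: S_inv linearD_scale[OF antipode_linear])
qed

lemma inv_antipode_right:
  assumes "bij S"
  shows "sum_list (map (\<lambda>(a,b). b * inv S a) (Delta h)) = sH (eps h) 1"
proof -
  have S_inv: "S (inv S x) = x" for x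
    using assms by (simp add: bij_is_surj surj_f_inv_f)
  have "S (sum_list (map (\<lambda>(a,b). b * inv S a) (Delta h))) = sum_list (map (\<lambda>(a,b). a * S b) (Delta h))"
    by (simp add: linearD_sum_list[OF antipode_linear] antipode_mult S_inv split_def)
  also have "\<dots> = S (sH (eps h) 1)"
    by (simp add: antipode_right linearD_scale[OF antipode_linear] antipode_one)
  finally show ?thesis
    using assms by (simp add: bij_is_inj inj_eq)
qed

end

section \<open>Module algebras\<close>

context H_module_algebra
begin

lemma act_add_left: "act (g + h) a = act g a + act h a"
  using linearD_add[OF act_linear_left] .

lemma act_scale_left: "act (sH c h) a = sA c (act h a)"
  using linearD_scale[OF act_linear_left] .

lemma act_sum_list_left: "act (sum_list (map f xs)) a = sum_list (map (\<lambda>x. act (f x) a) xs)"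
  using linearD_sum_list[OF act_linear_left] .

lemma act_add: "act h (a + b) = act h a + act h b"
  using linearD_add[OF act_linear_right] .

lemma act_scale: "act h (sA c a) = sA c (act h a)"
  using linearD_scale[OF act_linear_right] .

lemma act_zero: "act h 0 = 0"
  using linearD_zero[OF act_linear_right] .

lemma act_diff: "act h (a - b) = act h a - act h b"
  by (metis act_add diff_add_cancel eq_diff_eq)

lemma act_uminus: "act h (- a) = - act h a"
  using act_diff[of h 0 a] by (simp add: act_zero)

lemmas act_linear_simps = act_add_left act_scale_left act_add act_scale
  A.mult_scale_left A.mult_scale_right A.scale_sum_list_right sum_list_addf
  distrib_left distrib_right mult_scale_left mult_scale_right split_def
  linearD_add[OF antipode_linear] linearD_scale[OF antipode_linear]

lemma act_mult_expand: "act h a * x = sum_list (map (\<lambda>(u,w). act u (a * act (S w) x)) (Delta h))"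
proof -
  have "sum_list (map (\<lambda>(u,w). act u (a * act (S w) x)) (Delta h))
      = sum_list (map (\<lambda>(u,w). sum_list (map (\<lambda>(c1,c2). act c1 a * act (c2 * S w) x) (Delta u))) (Delta h))"
    by (simp add: act_prod act_mult)
  also have "\<dots> = sum_list (map (\<lambda>(u,w). sum_list (map (\<lambda>(b1,b2). act u a * act (b1 * S b2) x) (Delta w))) (Delta h))"
    by (rule coassoc_sum_list[OF A.vector_space_axioms];
        rule vector_space_linearI[OF vector_space_axioms A.vector_space_axioms]; simp add: act_linear_simps)
  also have "\<dots> = sum_list (map (\<lambda>(u,w). act u a * act (sum_list (map (\<lambda>(b1,b2). b1 * S b2) (Delta w))) x) (Delta h))"
    by (simp add: act_sum_list_left sum_list_const_mult split_def)
  also have "\<dots> = sum_list (map (\<lambda>(u,w). act (sH (eps w) u) a * x) (Delta h))"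
    by (simp add: antipode_right act_scale_left act_one A.mult_scale_left A.mult_scale_right)
  also have "\<dots> = act (sum_list (map (\<lambda>(u,w). sH (eps w) u) (Delta h))) a * x"
    by (simp add: act_sum_list_left sum_list_mult_const split_def)
  also have "\<dots> = act h a * x"
    by (simp only: counit_right)
  finally show ?thesis ..
qed

lemma mult_act_expand:
  assumes "bij S"
  shows "x * act h a = sum_list (map (\<lambda>(u,w). act w (act (inv S u) x * a)) (Delta h))"
proof -
  have "sum_list (map (\<lambda>(u,w). act w (act (inv S u) x * a)) (Delta h))
      = sum_list (map (\<lambda>(u,w). sum_list (map (\<lambda>(b1,b2). act (b1 * inv S u) x * act b2 a) (Delta w))) (Delta h))"
    by (simp add: act_prod act_mult)
  also have "\<dots> = sum_list (map (\<lambda>(u,w). sum_list (map (\<lambda>(c1,c2). act (c2 * inv S c1) x * act w a) (Delta u))) (Delta h))"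
    by (rule coassoc_sum_list[OF A.vector_space_axioms, symmetric];
        rule vector_space_linearI[OF vector_space_axioms A.vector_space_axioms];
        simp add: act_linear_simps linearD_add[OF linear_inv_antipode[OF assms]]
          linearD_scale[OF linear_inv_antipode[OF assms]])
  also have "\<dots> = sum_list (map (\<lambda>(u,w). act (sum_list (map (\<lambda>(c1,c2). c2 * inv S c1) (Delta u))) x * act w a) (Delta h))"
    by (simp add: act_sum_list_left sum_list_mult_const split_def)
  also have "\<dots> = sum_list (map (\<lambda>(u,w). x * act (sH (eps u) w) a) (Delta h))"
    by (simp add: inv_antipode_right[OF assms] act_scale_left act_one A.mult_scale_left A.mult_scale_right)
  also have "\<dots> = x * act (sum_list (map (\<lambda>(u,w). sH (eps u) w) (Delta h))) a"
    by (simp add: act_sum_list_left sum_list_const_mult split_def)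
  also have "\<dots> = x * act h a"
    by (simp only: counit_left)
  finally show ?thesis ..
qed

end

section \<open>Ideals and the Martindale quotient\<close>

lemma ring_idealI:
  assumes "0 \<in> I" "\<And>x y. x \<in> I \<Longrightarrow> y \<in> I \<Longrightarrow> x + y \<in> I" "\<And>x. x \<in> I \<Longrightarrow> - x \<in> I"
    and "\<And>x a. x \<in> I \<Longrightarrow> a * x \<in> I" "\<And>x a. x \<in> I \<Longrightarrow> x * a \<in> I"
  shows "ring_ideal I"
  unfolding ring_ideal_def using assms by simp

lemma ring_idealD:
  assumes "ring_ideal I" "x \<in> I"
  shows "a * x \<in> I" "x * a \<in> I"
  using assms unfolding ring_ideal_def by blast+

lemma ring_ideal_UNIV: "ring_ideal UNIV"
  unfolding ring_ideal_def by blast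

lemma ring_ideal_Int: "ring_ideal I \<Longrightarrow> ring_ideal J \<Longrightarrow> ring_ideal (I \<inter> J)"
  unfolding ring_ideal_def by blast

lemma ring_ideal_sum_list:
  "ring_ideal I \<Longrightarrow> (\<And>x. x \<in> set xs \<Longrightarrow> f x \<in> I) \<Longrightarrow> sum_list (map f xs) \<in> I"
  by (induction xs) (auto simp: ring_ideal_def)

lemma dense_idealsD:
  assumes "I \<in> dense_ideals"
  shows "ring_ideal I" "(\<And>x. x \<in> I \<Longrightarrow> a * x = 0) \<Longrightarrow> a = 0" "(\<And>x. x \<in> I \<Longrightarrow> x * a = 0) \<Longrightarrow> a = 0"
  using assms unfolding dense_ideals_def by blast+

lemma dense_ideals_superset: "I \<in> dense_ideals \<Longrightarrow> ring_ideal J \<Longrightarrow> I \<subseteq> J \<Longrightarrow> J \<in> dense_ideals"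
  unfolding dense_ideals_def by blast

lemma dense_ideals_if_contains_products:
  assumes I: "I \<in> dense_ideals" and J: "J \<in> dense_ideals" and "ring_ideal K"
    and prod: "\<And>x y. x \<in> I \<Longrightarrow> y \<in> J \<Longrightarrow> x * y \<in> K"
  shows "K \<in> dense_ideals"
  unfolding dense_ideals_def
proof (intro CollectI conjI allI impI)
  fix a assume "\<forall>z\<in>K. a * z = 0"
  then have "a * x * y = 0" if "x \<in> I" "y \<in> J" for x y
    using prod[OF that] by (simp add: mult.assoc)
  then show "a = 0" using dense_idealsD(2)[OF I] dense_idealsD(2)[OF J] by metis
next
  fix a assume "\<forall>z\<in>K. z * a = 0"
  then have "x * (y * a) = 0" if "x \<in> I" "y \<in> J" for x y
    using prod[OF that] by (simp add: mult.assoc[symmetric])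
  then show "a = 0" using dense_idealsD(3)[OF I] dense_idealsD(3)[OF J] by metis
qed (fact \<open>ring_ideal K\<close>)

definition left_conductor :: "('a::ring_1 \<Rightarrow> 'q::ring_1) \<Rightarrow> 'q \<Rightarrow> 'a set \<Rightarrow> 'a set" where
  "left_conductor iota q K = {x. \<forall>b. q * iota b * iota x \<in> iota ` K}"

definition right_conductor :: "('a::ring_1 \<Rightarrow> 'q::ring_1) \<Rightarrow> 'q \<Rightarrow> 'a set \<Rightarrow> 'a set" where
  "right_conductor iota q K = {x. \<forall>b. iota x * iota b * q \<in> iota ` K}"

lemma Dq_eq_conductors: "Dq iota q = left_conductor iota q UNIV \<inter> right_conductor iota q UNIV"
  unfolding Dq_def left_conductor_def right_conductor_def by blast

locale martindale_quotient =
  fixes iota :: "'a::ring_1 \<Rightarrow> 'q::ring_1"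
  assumes sym_martindale: "sym_martindale iota"
begin

lemma iota_eq_iff: "iota a = iota b \<longleftrightarrow> a = b"
  using sym_martindale unfolding sym_martindale_def by (elim conjE) (simp add: inj_eq)

lemma iota_add: "iota (a + b) = iota a + iota b"
  using sym_martindale unfolding sym_martindale_def by (elim conjE) simp

lemma iota_mult: "iota (a * b) = iota a * iota b"
  using sym_martindale unfolding sym_martindale_def by (elim conjE) simp

lemma iota_one: "iota 1 = 1"
  using sym_martindale unfolding sym_martindale_def by (elim conjE)

lemma iota_zero: "iota 0 = 0"
  by (metis add_cancel_right_right add_0 iota_add)

lemma iota_minus: "iota (- a) = - iota a"
  by (metis add.right_inverse add_eq_0_iff iota_add iota_zero)

lemma iota_diff: "iota (a - b) = iota a - iota b"
  by (simp only: diff_conv_add_uminus iota_add iota_minus)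

lemma iota_sum_list: "iota (sum_list (map f xs)) = sum_list (map (\<lambda>x. iota (f x)) xs)"
  by (induction xs) (auto simp: iota_zero iota_add)

lemma dense_denominator_ideal:
  obtains I where "I \<in> dense_ideals" "\<And>x. x \<in> I \<Longrightarrow> q * iota x \<in> range iota \<and> iota x * q \<in> range iota"
  using sym_martindale unfolding sym_martindale_def by (elim conjE) metis

lemma eq_0_if_left_annihilates:
  "I \<in> dense_ideals \<Longrightarrow> (\<And>x. x \<in> I \<Longrightarrow> iota x * q = 0) \<Longrightarrow> q = 0"
  using sym_martindale unfolding sym_martindale_def by (elim conjE) metis

lemma eq_0_if_right_annihilates:
  "I \<in> dense_ideals \<Longrightarrow> (\<And>x. x \<in> I \<Longrightarrow> q * iota x = 0) \<Longrightarrow> q = 0"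
  using sym_martindale unfolding sym_martindale_def by (elim conjE) metis

lemma zero_mem_image_iota: "ring_ideal K \<Longrightarrow> 0 \<in> iota ` K"
  unfolding ring_ideal_def by (metis image_eqI iota_zero)

lemma image_iota_add: "ring_ideal K \<Longrightarrow> u \<in> iota ` K \<Longrightarrow> v \<in> iota ` K \<Longrightarrow> u + v \<in> iota ` K"
  unfolding ring_ideal_def by (auto simp flip: iota_add)

lemma image_iota_uminus: "ring_ideal K \<Longrightarrow> u \<in> iota ` K \<Longrightarrow> - u \<in> iota ` K"
  unfolding ring_ideal_def by (auto simp flip: iota_minus)

lemma image_iota_mult_right: "ring_ideal K \<Longrightarrow> u \<in> iota ` K \<Longrightarrow> u * iota a \<in> iota ` K"
  unfolding ring_ideal_def by (auto simp flip: iota_mult)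

lemma image_iota_mult_left: "ring_ideal K \<Longrightarrow> u \<in> iota ` K \<Longrightarrow> iota a * u \<in> iota ` K"
  unfolding ring_ideal_def by (auto simp flip: iota_mult)

lemma ring_ideal_left_conductor:
  assumes K: "ring_ideal K"
  shows "ring_ideal (left_conductor iota q K)"
proof -
  have mem: "x \<in> left_conductor iota q K \<longleftrightarrow> (\<forall>b. q * iota b * iota x \<in> iota ` K)" for x
    unfolding left_conductor_def by blast
  have "0 \<in> left_conductor iota q K"
    using zero_mem_image_iota[OF K] by (simp add: mem iota_zero)
  moreover have "x + y \<in> left_conductor iota q K"
    if "x \<in> left_conductor iota q K" "y \<in> left_conductor iota q K" for x y
    using that image_iota_add[OF K] unfolding mem by (simp add: iota_add distrib_left)
  moreover have "- x \<in> left_conductor iota q K" if "x \<in> left_conductor iota q K" for x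
    using that image_iota_uminus[OF K] unfolding mem by (simp add: iota_minus)
  moreover have "a * x \<in> left_conductor iota q K" "x * a \<in> left_conductor iota q K"
    if "x \<in> left_conductor iota q K" for x a
  proof -
    have x: "q * iota b * iota x \<in> iota ` K" for b using that unfolding mem by blast
    show "a * x \<in> left_conductor iota q K"
      using x[of "_ * a"] unfolding mem by (simp add: iota_mult mult.assoc)
    show "x * a \<in> left_conductor iota q K"
      using image_iota_mult_right[OF K x] unfolding mem by (simp add: iota_mult mult.assoc)
  qed
  ultimately show ?thesis
    by (rule ring_idealI)
qed

lemma ring_ideal_right_conductor:
  assumes K: "ring_ideal K"
  shows "ring_ideal (right_conductor iota q K)"
proof -
  have mem: "x \<in> right_conductor iota q K \<longleftrightarrow> (\<forall>b. iota x * iota b * q \<in> iota ` K)" for x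
    unfolding right_conductor_def by blast
  have "0 \<in> right_conductor iota q K"
    using zero_mem_image_iota[OF K] by (simp add: mem iota_zero)
  moreover have "x + y \<in> right_conductor iota q K"
    if "x \<in> right_conductor iota q K" "y \<in> right_conductor iota q K" for x y
    using that image_iota_add[OF K] unfolding mem by (simp add: iota_add distrib_right)
  moreover have "- x \<in> right_conductor iota q K" if "x \<in> right_conductor iota q K" for x
    using that image_iota_uminus[OF K] unfolding mem by (simp add: iota_minus)
  moreover have "a * x \<in> right_conductor iota q K" "x * a \<in> right_conductor iota q K"
    if "x \<in> right_conductor iota q K" for x a
  proof -
    have x: "iota x * iota b * q \<in> iota ` K" for b using that unfolding mem by blast
    show "a * x \<in> right_conductor iota q K"
      using image_iota_mult_left[OF K x] unfolding mem by (simp add: iota_mult mult.assoc)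
    show "x * a \<in> right_conductor iota q K"
      using x[of "a * _"] unfolding mem by (simp add: iota_mult mult.assoc)
  qed
  ultimately show ?thesis
    by (rule ring_idealI)
qed

lemma ring_ideal_Dq: "ring_ideal (Dq iota q)"
  unfolding Dq_eq_conductors
  by (intro ring_ideal_Int ring_ideal_left_conductor ring_ideal_right_conductor ring_ideal_UNIV)

lemma Dq_dense: "Dq iota q \<in> dense_ideals"
proof -
  obtain I where I: "I \<in> dense_ideals" "\<And>x. x \<in> I \<Longrightarrow> q * iota x \<in> range iota \<and> iota x * q \<in> range iota"
    using dense_denominator_ideal by blast
  have "I \<subseteq> Dq iota q"
  proof
    fix x assume "x \<in> I"
    then have "b * x \<in> I" "x * b \<in> I" for b
      using ring_idealD dense_idealsD(1)[OF I(1)] by blast+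
    moreover have "q * iota b * iota x = q * iota (b * x)" "iota x * iota b * q = iota (x * b) * q" for b
      by (simp_all add: iota_mult mult.assoc)
    ultimately show "x \<in> Dq iota q"
      unfolding Dq_def using I(2) by simp
  qed
  then show ?thesis using dense_ideals_superset[OF I(1) ring_ideal_Dq] by blast
qed

lemma Dq_mult_left_in_range:
  assumes "d \<in> Dq iota q"
  shows "q * iota d \<in> range iota"
proof -
  have "q * iota 1 * iota d \<in> range iota" using assms unfolding Dq_def by blast
  then show ?thesis by (simp add: iota_one)
qed

lemma Dq_mult_right_in_range:
  assumes "d \<in> Dq iota q"
  shows "iota d * q \<in> range iota"
proof -
  have "iota d * iota 1 * q \<in> range iota" using assms unfolding Dq_def by blast
  then show ?thesis by (simp add: iota_one)
qed

lemma mult_mem_left_conductor: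
  assumes "x \<in> Dq iota q" "ring_ideal K" "y \<in> K"
  shows "x * y \<in> left_conductor iota q K"
  unfolding left_conductor_def
proof (intro CollectI allI)
  fix b
  obtain c where "q * iota b * iota x = iota c" using assms(1) unfolding Dq_def by blast
  moreover have "c * y \<in> K" using ring_idealD[OF assms(2,3)] by blast
  ultimately show "q * iota b * iota (x * y) \<in> iota ` K"
    by (metis iota_mult mult.assoc image_eqI)
qed

lemma mult_mem_right_conductor:
  assumes "y \<in> Dq iota q" "ring_ideal K" "x \<in> K"
  shows "x * y \<in> right_conductor iota q K"
  unfolding right_conductor_def
proof (intro CollectI allI)
  fix b
  obtain c where "iota y * iota b * q = iota c" using assms(1) unfolding Dq_def by blast
  moreover have "x * c \<in> K" using ring_idealD[OF assms(2,3)] by blast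
  ultimately show "iota (x * y) * iota b * q \<in> iota ` K"
    by (metis iota_mult mult.assoc image_eqI)
qed

end

section \<open>The H-compatible part of the quotient ring\<close>

(* h.(dq) = (h.d)q, with dq read through iota: the condition is vacuous unless dq lies in A. *)
definition right_H_compatible :: "('h \<Rightarrow> 'a \<Rightarrow> 'a) \<Rightarrow> ('a::ring_1 \<Rightarrow> 'q::ring_1) \<Rightarrow> 'q \<Rightarrow> 'a \<Rightarrow> bool" where
  "right_H_compatible act iota q d \<longleftrightarrow>
    (\<forall>h a. iota a = iota d * q \<longrightarrow> iota (act h a) = iota (act h d) * q)"

definition left_H_compatible :: "('h \<Rightarrow> 'a \<Rightarrow> 'a) \<Rightarrow> ('a::ring_1 \<Rightarrow> 'q::ring_1) \<Rightarrow> 'q \<Rightarrow> 'a \<Rightarrow> bool" where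
  "left_H_compatible act iota q d \<longleftrightarrow>
    (\<forall>h a. iota a = q * iota d \<longrightarrow> iota (act h a) = q * iota (act h d))"

lemma QH_iff_compatible:
  "q \<in> QH act iota \<longleftrightarrow>
    (\<forall>d\<in>Dq iota q. left_H_compatible act iota q d \<and> right_H_compatible act iota q d)"
  unfolding QH_def left_H_compatible_def right_H_compatible_def by blast

lemma EH_iff: "I \<in> EH act \<longleftrightarrow> I \<in> dense_ideals \<and> (\<forall>h x. x \<in> I \<longrightarrow> act h x \<in> I)"
  unfolding EH_def by blast

locale H_martindale = H_module_algebra sH Delta eps S sA act + martindale_quotient iota
  for sH :: "'k::field \<Rightarrow> 'h::ring_1 \<Rightarrow> 'h" and Delta eps S
    and sA :: "'k \<Rightarrow> 'a::ring_1 \<Rightarrow> 'a" and act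
    and iota :: "'a \<Rightarrow> 'q::ring_1" +
  assumes bij_antipode: "bij S"
begin

lemma act_mem_left_conductor:
  assumes q: "q \<in> QH act iota" and K: "ring_ideal K" "\<And>h y. y \<in> K \<Longrightarrow> act h y \<in> K"
    and x: "x \<in> Dq iota q" "x \<in> left_conductor iota q K"
  shows "act h x \<in> left_conductor iota q K"
  unfolding left_conductor_def
proof (intro CollectI allI)
  fix b
  have "\<forall>u. \<exists>k. k \<in> K \<and> q * iota (act (inv S u) b * x) = iota k"
    using x(2) unfolding left_conductor_def by (auto simp: iota_mult mult.assoc)
  then obtain k where k: "\<And>u. k u \<in> K" "\<And>u. q * iota (act (inv S u) b * x) = iota (k u)"
    by (rule choice[THEN exE]) blast
  have "act (inv S u) b * x \<in> Dq iota q" for u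
    using ring_idealD(1)[OF ring_ideal_Dq x(1)] .
  then have k_act: "iota (act w (k u)) = q * iota (act w (act (inv S u) b * x))" for u w
    using q k(2) unfolding QH_iff_compatible left_H_compatible_def by metis
  have "q * iota b * iota (act h x) = q * iota (b * act h x)"
    by (simp add: iota_mult mult.assoc)
  also have "\<dots> = sum_list (map (\<lambda>(u,w). q * iota (act w (act (inv S u) b * x))) (Delta h))"
    by (simp add: mult_act_expand[OF bij_antipode] iota_sum_list sum_list_const_mult split_def)
  also have "\<dots> = iota (sum_list (map (\<lambda>(u,w). act w (k u)) (Delta h)))"
    by (simp add: k_act iota_sum_list split_def)
  finally have "q * iota b * iota (act h x) = iota (sum_list (map (\<lambda>(u,w). act w (k u)) (Delta h)))" .
  moreover have "sum_list (map (\<lambda>(u,w). act w (k u)) (Delta h)) \<in> K"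
    by (rule ring_ideal_sum_list[OF K(1)]) (auto simp: K(2) k(1))
  ultimately show "q * iota b * iota (act h x) \<in> iota ` K" by simp
qed

lemma act_mem_right_conductor:
  assumes q: "q \<in> QH act iota" and K: "ring_ideal K" "\<And>h y. y \<in> K \<Longrightarrow> act h y \<in> K"
    and x: "x \<in> Dq iota q" "x \<in> right_conductor iota q K"
  shows "act h x \<in> right_conductor iota q K"
  unfolding right_conductor_def
proof (intro CollectI allI)
  fix b
  have "\<forall>w. \<exists>k. k \<in> K \<and> iota (x * act (S w) b) * q = iota k"
    using x(2) unfolding right_conductor_def by (auto simp: iota_mult mult.assoc)
  then obtain k where k: "\<And>w. k w \<in> K" "\<And>w. iota (x * act (S w) b) * q = iota (k w)"
    by (rule choice[THEN exE]) blast
  have "x * act (S w) b \<in> Dq iota q" for w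
    using ring_idealD(2)[OF ring_ideal_Dq x(1)] .
  then have k_act: "iota (act u (k w)) = iota (act u (x * act (S w) b)) * q" for u w
    using q k(2) unfolding QH_iff_compatible right_H_compatible_def by metis
  have "iota (act h x) * iota b * q = iota (act h x * b) * q"
    by (simp add: iota_mult)
  also have "\<dots> = sum_list (map (\<lambda>(u,w). iota (act u (x * act (S w) b)) * q) (Delta h))"
    by (simp add: act_mult_expand iota_sum_list sum_list_mult_const split_def)
  also have "\<dots> = iota (sum_list (map (\<lambda>(u,w). act u (k w)) (Delta h)))"
    by (simp add: k_act iota_sum_list split_def)
  finally have "iota (act h x) * iota b * q = iota (sum_list (map (\<lambda>(u,w). act u (k w)) (Delta h)))" .
  moreover have "sum_list (map (\<lambda>(u,w). act u (k w)) (Delta h)) \<in> K"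
    by (rule ring_ideal_sum_list[OF K(1)]) (auto simp: K(2) k(1))
  ultimately show "iota (act h x) * iota b * q \<in> iota ` K" by simp
qed

lemma act_mem_Dq: "q \<in> QH act iota \<Longrightarrow> d \<in> Dq iota q \<Longrightarrow> act h d \<in> Dq iota q"
  using act_mem_left_conductor[OF _ ring_ideal_UNIV] act_mem_right_conductor[OF _ ring_ideal_UNIV]
  unfolding Dq_eq_conductors by blast

lemma Dq_mem_EH: "q \<in> QH act iota \<Longrightarrow> Dq iota q \<in> EH act"
  unfolding EH_iff using Dq_dense act_mem_Dq by blast

lemma right_H_compatible_if_on_ideal:
  assumes I: "I \<in> EH act" and comp: "\<And>y. y \<in> I \<Longrightarrow> right_H_compatible act iota q y"
  shows "right_H_compatible act iota q d"
  unfolding right_H_compatible_def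
proof (intro allI impI)
  fix h a assume a: "iota a = iota d * q"
  have dense: "I \<in> dense_ideals" and stable: "\<And>g y. y \<in> I \<Longrightarrow> act g y \<in> I"
    using I unfolding EH_iff by blast+
  have "iota x * (iota (act h a) - iota (act h d) * q) = 0" if x: "x \<in> I" for x
  proof -
    have "act (inv S u) x * d \<in> I" for u
      using ring_idealD(2)[OF dense_idealsD(1)[OF dense] stable[OF x]] .
    moreover have "iota (act (inv S u) x * a) = iota (act (inv S u) x * d) * q" for u
      by (simp add: iota_mult a mult.assoc)
    ultimately have step: "iota (act w (act (inv S u) x * a)) = iota (act w (act (inv S u) x * d)) * q" for u w
      using comp unfolding right_H_compatible_def by blast
    have "iota x * iota (act h a) = sum_list (map (\<lambda>(u,w). iota (act w (act (inv S u) x * a))) (Delta h))"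
      by (simp add: mult_act_expand[OF bij_antipode] iota_sum_list split_def flip: iota_mult)
    also have "\<dots> = iota (x * act h d) * q"
      by (simp add: step mult_act_expand[OF bij_antipode] iota_sum_list sum_list_mult_const split_def)
    finally show ?thesis
      by (simp add: right_diff_distrib iota_mult mult.assoc)
  qed
  then show "iota (act h a) = iota (act h d) * q"
    using eq_0_if_left_annihilates[OF dense] by fastforce
qed

lemma left_H_compatible_if_on_ideal:
  assumes I: "I \<in> EH act" and comp: "\<And>y. y \<in> I \<Longrightarrow> left_H_compatible act iota q y"
  shows "left_H_compatible act iota q d"
  unfolding left_H_compatible_def
proof (intro allI impI)
  fix h a assume a: "iota a = q * iota d"
  have dense: "I \<in> dense_ideals" and stable: "\<And>g y. y \<in> I \<Longrightarrow> act g y \<in> I"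
    using I unfolding EH_iff by blast+
  have "(iota (act h a) - q * iota (act h d)) * iota x = 0" if x: "x \<in> I" for x
  proof -
    have "d * act (S w) x \<in> I" for w
      using ring_idealD(1)[OF dense_idealsD(1)[OF dense] stable[OF x]] .
    moreover have "iota (a * act (S w) x) = q * iota (d * act (S w) x)" for w
      by (simp add: iota_mult a mult.assoc)
    ultimately have step: "iota (act u (a * act (S w) x)) = q * iota (act u (d * act (S w) x))" for u w
      using comp unfolding left_H_compatible_def by blast
    have "iota (act h a) * iota x = sum_list (map (\<lambda>(u,w). iota (act u (a * act (S w) x))) (Delta h))"
      by (simp add: act_mult_expand iota_sum_list split_def flip: iota_mult)
    also have "\<dots> = q * iota (act h d * x)"
      by (simp add: step act_mult_expand iota_sum_list sum_list_const_mult split_def)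
    finally show ?thesis
      by (simp add: left_diff_distrib iota_mult mult.assoc)
  qed
  then show "iota (act h a) = q * iota (act h d)"
    using eq_0_if_right_annihilates[OF dense] by fastforce
qed

lemma QH_if_compatible_on_ideal:
  assumes "I \<in> EH act"
    and "\<And>y. y \<in> I \<Longrightarrow> left_H_compatible act iota q y \<and> right_H_compatible act iota q y"
  shows "q \<in> QH act iota"
  unfolding QH_iff_compatible
  using left_H_compatible_if_on_ideal[OF assms(1)] right_H_compatible_if_on_ideal[OF assms(1)] assms(2)
  by blast

lemma act_mult_invariant_right:
  assumes "c \<in> invariants act eps sA"
  shows "act h (d * c) = act h d * c"
proof -
  have c: "act g c = sA (eps g) c" for g
    using assms unfolding invariants_def by simp
  have "act h (d * c) = sum_list (map (\<lambda>(u,w). act (sH (eps w) u) d * c) (Delta h))"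
    by (simp add: act_prod c act_scale_left A.mult_scale_left A.mult_scale_right split_def)
  also have "\<dots> = act (sum_list (map (\<lambda>(u,w). sH (eps w) u) (Delta h))) d * c"
    by (simp add: act_sum_list_left sum_list_mult_const split_def)
  finally show ?thesis
    by (simp only: counit_right)
qed

lemma act_mult_invariant_left:
  assumes "c \<in> invariants act eps sA"
  shows "act h (c * d) = c * act h d"
proof -
  have c: "act g c = sA (eps g) c" for g
    using assms unfolding invariants_def by simp
  have "act h (c * d) = sum_list (map (\<lambda>(u,w). c * act (sH (eps u) w) d) (Delta h))"
    by (simp add: act_prod c act_scale_left A.mult_scale_left A.mult_scale_right split_def)
  also have "\<dots> = c * act (sum_list (map (\<lambda>(u,w). sH (eps u) w) (Delta h))) d"
    by (simp add: act_sum_list_left sum_list_const_mult split_def)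
  finally show ?thesis
    by (simp only: counit_left)
qed

lemma invariant_mem_QH:
  assumes c: "c \<in> invariants act eps sA"
  shows "iota c \<in> QH act iota"
  unfolding QH_iff_compatible left_H_compatible_def right_H_compatible_def
  by (simp add: iota_eq_iff act_mult_invariant_right[OF c] act_mult_invariant_left[OF c]
      flip: iota_mult)

lemma right_H_compatible_add:
  assumes "right_H_compatible act iota p a" "right_H_compatible act iota q a" "iota a * p \<in> range iota"
  shows "right_H_compatible act iota (p + q) a"
  unfolding right_H_compatible_def
proof (intro allI impI)
  fix h b assume b: "iota b = iota a * (p + q)"
  obtain c where c: "iota c = iota a * p" using assms(3) by auto
  then have "iota (b - c) = iota a * q"
    using b by (simp add: iota_diff distrib_left)
  then have "iota (act h (b - c)) = iota (act h a) * q"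
    using assms(2) unfolding right_H_compatible_def by blast
  moreover have "iota (act h c) = iota (act h a) * p"
    using assms(1) c unfolding right_H_compatible_def by blast
  moreover have "act h b = act h c + act h (b - c)"
    by (simp add: act_diff)
  ultimately show "iota (act h b) = iota (act h a) * (p + q)"
    by (simp add: iota_add distrib_left)
qed

lemma left_H_compatible_add:
  assumes "left_H_compatible act iota p a" "left_H_compatible act iota q a" "p * iota a \<in> range iota"
  shows "left_H_compatible act iota (p + q) a"
  unfolding left_H_compatible_def
proof (intro allI impI)
  fix h b assume b: "iota b = (p + q) * iota a"
  obtain c where c: "iota c = p * iota a" using assms(3) by auto
  then have "iota (b - c) = q * iota a"
    using b by (simp add: iota_diff distrib_right)
  then have "iota (act h (b - c)) = q * iota (act h a)"
    using assms(2) unfolding left_H_compatible_def by blast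
  moreover have "iota (act h c) = p * iota (act h a)"
    using assms(1) c unfolding left_H_compatible_def by blast
  moreover have "act h b = act h c + act h (b - c)"
    by (simp add: act_diff)
  ultimately show "iota (act h b) = (p + q) * iota (act h a)"
    by (simp add: iota_add distrib_right)
qed

lemma right_H_compatible_mult:
  assumes "right_H_compatible act iota p a" "iota c = iota a * p" "right_H_compatible act iota q c"
  shows "right_H_compatible act iota (p * q) a"
  unfolding right_H_compatible_def
proof (intro allI impI)
  fix h b assume "iota b = iota a * (p * q)"
  then have "iota b = iota c * q" using assms(2) by (simp add: mult.assoc)
  then have "iota (act h b) = iota (act h c) * q"
    using assms(3) unfolding right_H_compatible_def by blast
  also have "\<dots> = iota (act h a) * (p * q)"
    using assms(1,2) unfolding right_H_compatible_def by (simp add: mult.assoc)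
  finally show "iota (act h b) = iota (act h a) * (p * q)" .
qed

lemma left_H_compatible_mult:
  assumes "left_H_compatible act iota q a" "iota c = q * iota a" "left_H_compatible act iota p c"
  shows "left_H_compatible act iota (p * q) a"
  unfolding left_H_compatible_def
proof (intro allI impI)
  fix h b assume "iota b = p * q * iota a"
  then have "iota b = p * iota c" using assms(2) by (simp add: mult.assoc)
  then have "iota (act h b) = p * iota (act h c)"
    using assms(3) unfolding left_H_compatible_def by blast
  also have "\<dots> = p * q * iota (act h a)"
    using assms(1,2) unfolding left_H_compatible_def by (simp add: mult.assoc)
  finally show "iota (act h b) = p * q * iota (act h a)" .
qed

lemma QH_add:
  assumes p: "p \<in> QH act iota" and q: "q \<in> QH act iota"
  shows "p + q \<in> QH act iota"
proof (rule QH_if_compatible_on_ideal)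
  have "Dq iota p \<inter> Dq iota q \<in> dense_ideals"
    using dense_ideals_if_contains_products[OF Dq_dense Dq_dense ring_ideal_Int[OF ring_ideal_Dq ring_ideal_Dq]]
      ring_idealD[OF ring_ideal_Dq] by blast
  then show "Dq iota p \<inter> Dq iota q \<in> EH act"
    unfolding EH_iff using act_mem_Dq[OF p] act_mem_Dq[OF q] by blast
  fix y assume y: "y \<in> Dq iota p \<inter> Dq iota q"
  then show "left_H_compatible act iota (p + q) y \<and> right_H_compatible act iota (p + q) y"
    using p q Dq_mult_left_in_range Dq_mult_right_in_range left_H_compatible_add right_H_compatible_add
    unfolding QH_iff_compatible by blast
qed

lemma QH_mult:
  assumes p: "p \<in> QH act iota" and q: "q \<in> QH act iota"
  shows "p * q \<in> QH act iota"
proof -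
  define J where "J = Dq iota p \<inter> Dq iota q \<inter> left_conductor iota q (Dq iota p) \<inter> right_conductor iota p (Dq iota q)"
  have Dp: "ring_ideal (Dq iota p)" "\<And>h y. y \<in> Dq iota p \<Longrightarrow> act h y \<in> Dq iota p"
    using ring_ideal_Dq act_mem_Dq[OF p] by blast+
  have Dq: "ring_ideal (Dq iota q)" "\<And>h y. y \<in> Dq iota q \<Longrightarrow> act h y \<in> Dq iota q"
    using ring_ideal_Dq act_mem_Dq[OF q] by blast+
  have "ring_ideal J"
    unfolding J_def
    by (intro ring_ideal_Int ring_ideal_left_conductor ring_ideal_right_conductor Dp(1) Dq(1))
  moreover have "e * d \<in> J" if "e \<in> Dq iota q" "d \<in> Dq iota p" for e d
    unfolding J_def
    using that ring_idealD[OF Dp(1)] ring_idealD[OF Dq(1)]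
      mult_mem_left_conductor[OF that(1) Dp(1) that(2)] mult_mem_right_conductor[OF that(2) Dq(1) that(1)]
    by blast
  ultimately have "J \<in> dense_ideals"
    using dense_ideals_if_contains_products[OF Dq_dense Dq_dense] by blast
  moreover have "act h x \<in> J" if "x \<in> J" for h x
    using that act_mem_Dq[OF p] act_mem_Dq[OF q]
      act_mem_left_conductor[OF q Dp] act_mem_right_conductor[OF p Dq]
    unfolding J_def by blast
  ultimately have "J \<in> EH act"
    unfolding EH_iff by blast
  then show ?thesis
  proof (rule QH_if_compatible_on_ideal)
    fix a assume a: "a \<in> J"
    have "q * iota 1 * iota a \<in> iota ` Dq iota p" "iota a * iota 1 * p \<in> iota ` Dq iota q"
      using a unfolding J_def left_conductor_def right_conductor_def by blast+
    then obtain c c' where c: "iota c = q * iota a" "c \<in> Dq iota p"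
      and c': "iota c' = iota a * p" "c' \<in> Dq iota q"
      by (auto simp: iota_one)
    show "left_H_compatible act iota (p * q) a \<and> right_H_compatible act iota (p * q) a"
      using left_H_compatible_mult[OF _ c(1)] right_H_compatible_mult[OF _ c'(1)] c(2) c'(2) a p q
      unfolding J_def QH_iff_compatible by blast
  qed
qed

lemma QH_subalgebra: "subalgebra_Q sA iota (QH act iota)"
proof -
  have "0 \<in> invariants act eps sA" "1 \<in> invariants act eps sA" "- 1 \<in> invariants act eps sA"
    "sA c 1 \<in> invariants act eps sA" for c
    unfolding invariants_def
    by (simp_all add: act_zero act_unit act_uminus act_scale A.scale_minus_right A.scale_scale mult.commute)
  then have "iota 0 \<in> QH act iota" "iota 1 \<in> QH act iota" "iota (- 1) \<in> QH act iota"
    "iota (sA c 1) \<in> QH act iota" for c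
    using invariant_mem_QH by blast+
  then have "0 \<in> QH act iota" "1 \<in> QH act iota" "- 1 \<in> QH act iota" "iota (sA c 1) \<in> QH act iota"
    for c
    by (simp_all add: iota_zero iota_one iota_minus)
  moreover have "- x \<in> QH act iota" if "x \<in> QH act iota" for x
    using QH_mult[OF \<open>- 1 \<in> QH act iota\<close> that] by simp
  ultimately show ?thesis
    unfolding subalgebra_Q_def using QH_add QH_mult by blast
qed

end

theorem lemma2p1:
  fixes sH :: "'k::field \<Rightarrow> 'h::ring_1 \<Rightarrow> 'h"
    and Delta :: "'h \<Rightarrow> ('h \<times> 'h) list" and eps :: "'h \<Rightarrow> 'k" and S :: "'h \<Rightarrow> 'h"
    and sA :: "'k \<Rightarrow> 'a::ring_1 \<Rightarrow> 'a" and act :: "'h \<Rightarrow> 'a \<Rightarrow> 'a"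
    and iota :: "'a \<Rightarrow> 'q::ring_1"
  assumes "H_module_algebra sH Delta eps S sA act"
    and "bij S"
    and "sym_martindale iota"
  shows "(\<forall>q\<in>QH act iota. Dq iota q \<in> EH act)
    \<and> (\<forall>q I. I \<in> EH act \<and> I \<subseteq> Dq iota q
          \<and> (\<forall>h. \<forall>a\<in>I. (\<forall>b. iota b = iota a * q \<longrightarrow> iota (act h b) = iota (act h a) * q)
                       \<and> (\<forall>b. iota b = q * iota a \<longrightarrow> iota (act h b) = q * iota (act h a)))
          \<longrightarrow> q \<in> QH act iota)
    \<and> subalgebra_Q sA iota (QH act iota)
    \<and> iota ` invariants act eps sA \<subseteq> QH act iota"
proof -
  interpret H_martindale sH Delta eps S sA act iota
    using assms by (simp add: H_martindale_def H_martindale_axioms_def martindale_quotient_def)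
  have "q \<in> QH act iota" if "I \<in> EH act"
    and "\<forall>h. \<forall>a\<in>I. (\<forall>b. iota b = iota a * q \<longrightarrow> iota (act h b) = iota (act h a) * q)
                   \<and> (\<forall>b. iota b = q * iota a \<longrightarrow> iota (act h b) = q * iota (act h a))" for q I
    using QH_if_compatible_on_ideal[OF that(1)] that(2)
    unfolding left_H_compatible_def right_H_compatible_def by blast
  then show ?thesis
    using Dq_mem_EH QH_subalgebra invariant_mem_QH by blast
qed

end
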